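(* Let $l\ge3$ be an odd integer and let $(A,M)$ be any NIM-rep of the fusion ring $\mathrm{Gr}((A_1,l)_{\frac12})$. Then $(V_{l-1}^2\vartriangleright m_p,m_p)\le3$ for all $m_p\in M$.
   Context: For odd $l\ge3$, $\mathrm{Gr}((A_1,l)_{\frac12})$ is the commutative fusion ring with basis $\{V_0,V_2,V_4,\dots,V_{l-1}\}$ (unit $V_0$, every basis element self-dual) and multiplication $V_iV_j=\sum_k V_k$, the sum over all $k$ with $|i-j|\le k\le\min(i+j,2l-i-j)$ and $k\equiv i+j \pmod 2$. A NIM-rep of a fusion ring $(R,B)$ is a nonzero left $R$-module $A$, free over $\mathbb{Z}$ with a fixed basis $M$, such that each $b\vartriangleright m$ is a non-negative integer combination of elements of $M$ and $(b\vartriangleright m,m')=(m,b^*\vartriangleright m')$ for the symmetric bilinear form $(-,-)$ making $M$ orthonormal. *)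

theory Defs
  imports Main
begin

text \<open>The fusion ring Gr((A_1,l)_{1/2}) for odd l: basis V_k, k even, 0 <= k <= l-1.
  Ring elements are coefficient functions nat => int (coefficient of V_k at k).\<close>

definition fr_basis :: "nat \<Rightarrow> nat set" where
  "fr_basis l = {k. even k \<and> k \<le> l - 1}"

text \<open>Structure constant: coefficient of V_k in V_i V_j.\<close>
definition fus :: "nat \<Rightarrow> nat \<Rightarrow> nat \<Rightarrow> nat \<Rightarrow> int" where
  "fus l i j k = (if (if i \<le> j then j - i else i - j) \<le> k \<and> k \<le> min (i + j) (2 * l - (i + j))
                     \<and> k mod 2 = (i + j) mod 2 then 1 else 0)"

definition fr_mult_basis :: "nat \<Rightarrow> nat \<Rightarrow> nat \<Rightarrow> (nat \<Rightarrow> int)" where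
  "fr_mult_basis l i j = (\<lambda>k. fus l i j k)"

text \<open>Module elements: finitely supported functions 'm => int (coordinates w.r.t. basis M).
  N i m m' is the (non-negative integer) coefficient of m' in V_i |> m.\<close>

definition delta :: "'m \<Rightarrow> ('m \<Rightarrow> int)" where
  "delta m = (\<lambda>m'. if m' = m then 1 else 0)"

definition bact :: "(nat \<Rightarrow> 'm \<Rightarrow> 'm \<Rightarrow> nat) \<Rightarrow> nat \<Rightarrow> ('m \<Rightarrow> int) \<Rightarrow> ('m \<Rightarrow> int)" where
  "bact N i v = (\<lambda>m'. \<Sum>m\<in>{m. v m \<noteq> 0}. v m * int (N i m m'))"

definition ract :: "nat \<Rightarrow> (nat \<Rightarrow> 'm \<Rightarrow> 'm \<Rightarrow> nat) \<Rightarrow> (nat \<Rightarrow> int) \<Rightarrow> ('m \<Rightarrow> int) \<Rightarrow> ('m \<Rightarrow> int)" where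
  "ract l N x v = (\<lambda>m'. \<Sum>i\<in>fr_basis l. x i * bact N i v m')"

definition form :: "'m set \<Rightarrow> ('m \<Rightarrow> int) \<Rightarrow> ('m \<Rightarrow> int) \<Rightarrow> int" where
  "form M u v = (\<Sum>m\<in>{m\<in>M. u m \<noteq> 0}. u m * v m)"

text \<open>The module is the free Z-module on M;
  the action is determined by the basis actions N, required to be non-negative integer
  valued, finitely supported, unital, associative, and adjoint (all V_i are self-dual).\<close>
definition is_NIM_rep :: "nat \<Rightarrow> 'm set \<Rightarrow> (nat \<Rightarrow> 'm \<Rightarrow> 'm \<Rightarrow> nat) \<Rightarrow> bool" where
  "is_NIM_rep l M N \<longleftrightarrow>
     M \<noteq> {} \<and>
     (\<forall>i m m'. N i m m' \<noteq> 0 \<longrightarrow> i \<in> fr_basis l \<and> m \<in> M \<and> m' \<in> M) \<and>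
     (\<forall>i m. finite {m'. N i m m' \<noteq> 0}) \<and>
     (\<forall>m\<in>M. bact N 0 (delta m) = delta m) \<and>
     (\<forall>i\<in>fr_basis l. \<forall>j\<in>fr_basis l. \<forall>m\<in>M.
        bact N i (bact N j (delta m)) = ract l N (fr_mult_basis l i j) (delta m)) \<and>
     (\<forall>i\<in>fr_basis l. \<forall>m\<in>M. \<forall>m'\<in>M.
        form M (bact N i (delta m)) (delta m') = form M (delta m) (bact N i (delta m')))"

end

theory Submission
  imports Defs
begin

text \<open>Write \<open>n y\<close> for the coefficient of \<open>y\<close> in \<open>V\<^sub>l\<^sub>-\<^sub>1 \<rhd> m\<^sub>p\<close> and
  \<open>w = (\<Sum>\<^sub>i V\<^sub>i) \<rhd> m\<^sub>p\<close>. The fusion rules give \<open>V\<^sub>l\<^sub>-\<^sub>1 \<Sum>\<^sub>i V\<^sub>i = 2 \<Sum>\<^sub>i V\<^sub>i - V\<^sub>0\<close>,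
  so \<open>V\<^sub>l\<^sub>-\<^sub>1 \<rhd> w = 2 w - m\<^sub>p\<close>. Pairing with \<open>m\<^sub>p\<close> and using that \<open>V\<^sub>l\<^sub>-\<^sub>1\<close> is self-adjoint
  gives \<open>\<Sum>\<^sub>y w y n y = 2 W - 1\<close> with \<open>W = w m\<^sub>p \<ge> 1\<close>, while for \<open>y \<noteq> m\<^sub>p\<close> the
  coefficient \<open>2 w y\<close> of \<open>V\<^sub>l\<^sub>-\<^sub>1 \<rhd> w\<close> is at least \<open>W n y\<close>. Hence
  \<open>W (2 n m\<^sub>p + \<Sum>\<^sub>y\<^sub>\<noteq>\<^sub>m\<^sub>p n y\<^sup>2) \<le> 4 W - 2\<close>, which forces \<open>\<Sum>\<^sub>y n y\<^sup>2 \<le> 3\<close>; and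
  \<open>\<Sum>\<^sub>y n y\<^sup>2\<close> is the pairing in question.\<close>

lemma sum_squares_le_3_by_weights:
  fixes w n :: "'a \<Rightarrow> int"
  assumes "finite F" "p \<in> F"
    and n_nonneg: "\<And>y. y \<in> F \<Longrightarrow> n y \<ge> 0"
    and W_pos: "w p > 0"
    and pairing: "(\<Sum>y\<in>F. w y * n y) = 2 * w p - 1"
    and dominates: "\<And>y. y \<in> F - {p} \<Longrightarrow> w p * n y \<le> 2 * w y"
  shows "(\<Sum>y\<in>F. n y * n y) \<le> 3"
proof -
  define t where "t = (\<Sum>y\<in>F - {p}. n y * n y)"
  have "2 * (2 * w p - 1) = 2 * w p * n p + (\<Sum>y\<in>F - {p}. 2 * w y * n y)"
    using assms(1,2) by (simp add: pairing[symmetric] sum_distrib_left sum.remove mult.assoc)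
  also have "\<dots> \<ge> 2 * w p * n p + (\<Sum>y\<in>F - {p}. w p * n y * n y)"
    using dominates n_nonneg by (intro add_left_mono sum_mono mult_right_mono) auto
  finally have "w p * (2 * n p + t) < w p * 4"
    unfolding t_def by (simp add: algebra_simps sum_distrib_left)
  then have "2 * n p + t \<le> 3"
    using W_pos by (simp add: mult_less_cancel_left)
  moreover have "t \<ge> 0"
    unfolding t_def by (simp add: sum_nonneg)
  moreover have "n p * n p \<le> 2 * n p"
    using calculation n_nonneg[OF assms(2)] by (intro mult_right_mono) auto
  ultimately have "n p * n p + t \<le> 3"
    by linarith
  then show ?thesis
    unfolding t_def using assms(1,2) by (simp add: sum.remove)
qed

lemma finite_fr_basis: "finite (fr_basis l)"
  by (rule finite_subset[of _ "{..l}"]) (auto simp: fr_basis_def)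

lemma fus_top_eq:
  assumes "l = 2 * a + 1" "i = 2 * b" "k = 2 * c" "b \<le> a" "c \<le> a"
  shows "fus l (l - 1) i k = of_bool (b = a - c \<or> (c \<noteq> 0 \<and> b = a + 1 - c))"
proof -
  have "((if l - 1 \<le> i then i - (l - 1) else (l - 1) - i) \<le> k
          \<and> k \<le> min ((l - 1) + i) (2 * l - ((l - 1) + i))
          \<and> k mod 2 = ((l - 1) + i) mod 2)
        = (b = a - c \<or> (c \<noteq> 0 \<and> b = a + 1 - c))"
    using assms(4,5) unfolding assms(1-3) by (simp add: min_def; arith)
  then show ?thesis
    unfolding fus_def by (simp only:) simp
qed

text \<open>\<open>V\<^sub>k\<close> occurs in \<open>V\<^sub>l\<^sub>-\<^sub>1 V\<^sub>i\<close> exactly for \<open>i = l-1-k\<close> and, if \<open>k \<noteq> 0\<close>,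
  for \<open>i = l+1-k\<close>.\<close>

lemma sum_fus_top:
  assumes "odd l" "k \<in> fr_basis l"
  shows "(\<Sum>i\<in>fr_basis l. fus l (l - 1) i k) = 2 - of_bool (k = 0)"
proof -
  obtain a where a: "l = 2 * a + 1"
    using assms(1) by (auto elim: oddE)
  obtain c where c: "k = 2 * c" "c \<le> a"
    using assms(2) a by (auto simp: fr_basis_def elim!: evenE)
  define S where "S = (if k = 0 then {l - 1} else {l - 1 - k, l + 1 - k})"
  have fus_S: "fus l (l - 1) i k = of_bool (i \<in> S)" if i: "i \<in> fr_basis l" for i
  proof -
    obtain b where b: "i = 2 * b" "b \<le> a"
      using i a by (auto simp: fr_basis_def elim!: evenE)
    have "(b = a - c \<or> (c \<noteq> 0 \<and> b = a + 1 - c)) = (i \<in> S)"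
      unfolding S_def using a b c by auto
    then show ?thesis
      using fus_top_eq[OF a b(1) c(1) b(2) c(2)] by simp
  qed
  have "(\<Sum>i\<in>fr_basis l. fus l (l - 1) i k) = (\<Sum>i\<in>fr_basis l. of_bool (i \<in> S))"
    using fus_S by (rule sum.cong[OF refl])
  also have "\<dots> = int (card (fr_basis l \<inter> {i. i \<in> S}))"
    by (subst sum_of_bool_eq) (auto simp: finite_fr_basis)
  also have "fr_basis l \<inter> {i. i \<in> S} = S"
    using a c unfolding S_def fr_basis_def by auto
  finally show ?thesis
    using a c unfolding S_def by auto
qed

lemma bact_delta: "bact N i (delta m) = (\<lambda>m'. int (N i m m'))"
proof -
  have "{x. delta m x \<noteq> 0} = {m}"
    by (auto simp: delta_def)
  then show ?thesis
    unfolding bact_def by (simp add: delta_def)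
qed

lemma ract_delta: "ract l N x (delta m) m' = (\<Sum>k\<in>fr_basis l. x k * int (N k m m'))"
  by (simp add: ract_def bact_delta)

lemma form_delta_left:
  assumes "m \<in> M"
  shows "form M (delta m) v = v m"
proof -
  have "{x\<in>M. delta m x \<noteq> 0} = {m}"
    using assms by (auto simp: delta_def)
  then show ?thesis
    unfolding form_def by (simp add: delta_def)
qed

lemma form_delta_right:
  "form M u (delta m') = (if finite {m\<in>M. u m \<noteq> 0} \<and> m' \<in> M then u m' else 0)"
proof (cases "finite {m\<in>M. u m \<noteq> 0}")
  case True
  have "form M u (delta m') = (\<Sum>m\<in>{m\<in>M. u m \<noteq> 0}. if m' = m then u m else 0)"
    unfolding form_def delta_def by (rule sum.cong) auto
  also have "\<dots> = (if m' \<in> {m\<in>M. u m \<noteq> 0} then u m' else 0)"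
    using True by (rule sum.delta')
  finally show ?thesis
    using True by auto
qed (simp add: form_def)

lemma NIM_rep_support:
  assumes "is_NIM_rep l M N" "N i m m' \<noteq> 0"
  shows "i \<in> fr_basis l" "m \<in> M" "m' \<in> M"
  using assms unfolding is_NIM_rep_def by blast+

lemma NIM_rep_finite_support:
  assumes "is_NIM_rep l M N"
  shows "finite {m'. N i m m' \<noteq> 0}"
  using assms unfolding is_NIM_rep_def by blast

lemma NIM_rep_unit:
  assumes "is_NIM_rep l M N" "m \<in> M"
  shows "N 0 m m' = of_bool (m' = m)"
proof -
  have "bact N 0 (delta m) = delta m"
    using assms unfolding is_NIM_rep_def by blast
  then show ?thesis
    unfolding bact_delta by (auto simp: delta_def dest: fun_cong[of _ _ m'])
qed

lemma NIM_rep_symmetric: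
  assumes "is_NIM_rep l M N"
  shows "N i m m' = N i m' m"
proof (cases "N i m m' = 0 \<and> N i m' m = 0")
  case False
  then have i: "i \<in> fr_basis l" and m: "m \<in> M" "m' \<in> M"
    using NIM_rep_support[OF assms] by blast+
  have "finite {x\<in>M. int (N i m x) \<noteq> 0}"
    using NIM_rep_finite_support[OF assms] by (rule rev_finite_subset) auto
  then have "int (N i m m') = form M (bact N i (delta m)) (delta m')"
    using m by (simp add: form_delta_right bact_delta)
  also have "\<dots> = form M (delta m) (bact N i (delta m'))"
    using assms i m unfolding is_NIM_rep_def by blast
  also have "\<dots> = int (N i m' m)"
    using m by (simp add: form_delta_left bact_delta)
  finally show ?thesis
    by simp
qed simp

lemma NIM_rep_assoc:
  assumes "is_NIM_rep l M N" "i \<in> fr_basis l" "j \<in> fr_basis l" "m \<in> M"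
    and "finite F" "{y. N i m y \<noteq> 0} \<subseteq> F"
  shows "(\<Sum>y\<in>F. int (N i m y) * int (N j y z)) = (\<Sum>k\<in>fr_basis l. fus l j i k * int (N k m z))"
proof -
  have "(\<Sum>y\<in>F. int (N i m y) * int (N j y z))
      = (\<Sum>y\<in>{y. N i m y \<noteq> 0}. int (N i m y) * int (N j y z))"
    using assms(5,6) by (intro sum.mono_neutral_right) auto
  also have "\<dots> = bact N j (bact N i (delta m)) z"
    unfolding bact_delta by (simp add: bact_def)
  also have "\<dots> = ract l N (fr_mult_basis l j i) (delta m) z"
    using assms(1-4) unfolding is_NIM_rep_def by simp
  also have "\<dots> = (\<Sum>k\<in>fr_basis l. fus l j i k * int (N k m z))"
    by (simp add: ract_delta fr_mult_basis_def)
  finally show ?thesis .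
qed

lemma NIM_rep_top_action_on_sum:
  assumes "is_NIM_rep l M N" "odd l" "m \<in> M"
    and "finite F" "\<And>i. i \<in> fr_basis l \<Longrightarrow> {y. N i m y \<noteq> 0} \<subseteq> F"
  shows "(\<Sum>y\<in>F. (\<Sum>i\<in>fr_basis l. int (N i m y)) * int (N (l - 1) y z))
       = 2 * (\<Sum>i\<in>fr_basis l. int (N i m z)) - of_bool (z = m)"
proof -
  let ?B = "fr_basis l"
  have top: "l - 1 \<in> ?B" and zero: "0 \<in> ?B"
    using assms(2) by (auto simp: fr_basis_def)
  have "(\<Sum>y\<in>F. (\<Sum>i\<in>?B. int (N i m y)) * int (N (l - 1) y z))
      = (\<Sum>i\<in>?B. \<Sum>y\<in>F. int (N i m y) * int (N (l - 1) y z))"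
    unfolding sum_distrib_right by (rule sum.swap)
  also have "\<dots> = (\<Sum>i\<in>?B. \<Sum>k\<in>?B. fus l (l - 1) i k * int (N k m z))"
    using NIM_rep_assoc[OF assms(1) _ top assms(3,4,5)] by simp
  also have "\<dots> = (\<Sum>k\<in>?B. (\<Sum>i\<in>?B. fus l (l - 1) i k) * int (N k m z))"
    unfolding sum_distrib_right by (rule sum.swap)
  also have "\<dots> = (\<Sum>k\<in>?B. 2 * int (N k m z) - of_bool (k = 0) * int (N k m z))"
    using sum_fus_top[OF assms(2)] by (intro sum.cong) (simp_all add: left_diff_distrib)
  also have "\<dots> = 2 * (\<Sum>i\<in>?B. int (N i m z)) - int (N 0 m z)"
    using finite_fr_basis zero by (simp add: sum_subtractf sum_distrib_left)
  finally show ?thesis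
    using NIM_rep_unit[OF assms(1,3)] by simp
qed

theorem lemma3p33:
  fixes l :: nat and M :: "'m set" and N :: "nat \<Rightarrow> 'm \<Rightarrow> 'm \<Rightarrow> nat"
  assumes "odd l" and "l \<ge> 3"
    and "is_NIM_rep l M N"
    and "mp \<in> M"
  shows "form M (ract l N (fr_mult_basis l (l - 1) (l - 1)) (delta mp)) (delta mp) \<le> 3"
proof -
  define F where "F = insert mp (\<Union>i\<in>fr_basis l. {y. N i mp y \<noteq> 0})"
  define w where "w y = (\<Sum>i\<in>fr_basis l. int (N i mp y))" for y
  define n where "n y = int (N (l - 1) mp y)" for y
  have F: "finite F" "mp \<in> F" "\<And>i. i \<in> fr_basis l \<Longrightarrow> {y. N i mp y \<noteq> 0} \<subseteq> F"
    using NIM_rep_finite_support[OF assms(3)] finite_fr_basis unfolding F_def by auto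
  note top_action = NIM_rep_top_action_on_sum[OF assms(3,1,4) F(1,3), folded w_def]
  note symm = NIM_rep_symmetric[OF assms(3), of "l - 1" _ mp]
  have top: "l - 1 \<in> fr_basis l" and zero: "0 \<in> fr_basis l"
    using assms(1) by (auto simp: fr_basis_def)
  have "w mp \<ge> int (N 0 mp mp)"
    unfolding w_def using zero finite_fr_basis by (intro member_le_sum) auto
  then have "w mp > 0"
    using NIM_rep_unit[OF assms(3,4)] by simp
  moreover have "(\<Sum>y\<in>F. w y * n y) = 2 * w mp - 1"
    using top_action[of mp, unfolded symm] by (simp add: n_def)
  moreover have "w mp * n z \<le> 2 * w z" if "z \<in> F - {mp}" for z
    using top_action[of z] that member_le_sum[OF F(2), of "\<lambda>y. w y * int (N (l - 1) y z)"] F(1)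
    by (simp add: n_def w_def sum_nonneg)
  ultimately have "(\<Sum>y\<in>F. n y * n y) \<le> 3"
    using sum_squares_le_3_by_weights[OF F(1,2)] by (simp add: n_def)
  moreover have "ract l N (fr_mult_basis l (l - 1) (l - 1)) (delta mp) mp = (\<Sum>y\<in>F. n y * n y)"
    using NIM_rep_assoc[OF assms(3) top top assms(4) F(1) F(3)[OF top], of mp, unfolded symm]
    by (simp add: ract_delta fr_mult_basis_def n_def)
  ultimately show ?thesis
    by (simp add: form_delta_right)
qed

end
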